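(* Let \(a,b,c\) be positive integers, \(m\) a positive integer that is not a perfect square, with \(\gcd(a,b^2-c^2m)=1\), and let \(A,B\in\mathbb Z\). If \((x_0,y_0,z_0,w_0)\in\mathbb Z^4\) and \((x',y',z',w')\in\mathbb Z^4\) are both solutions of \(a(x+y\sqrt m)+(b+c\sqrt m)(z+w\sqrt m)=A+B\sqrt m\), then \(a\mid z_0-z'\) and \(a\mid w_0-w'\). *)

theory Defs
  imports Complex_Main
begin

end

theory Submission
  imports Defs
begin

text \<open>Subtracting the two solutions gives an equation of the same shape with right-hand side 0.
  Since \<open>\<surd>m\<close> is irrational it splits into two integer equations, which say that \<open>a\<close> divides
  both coordinates of \<open>(b + c\<surd>m)(z + w\<surd>m)\<close>, where \<open>z, w\<close> are the differences.
  Multiplying by the conjugate \<open>b - c\<surd>m\<close> shows that \<open>a\<close> divides \<open>(b\<^sup>2 - c\<^sup>2m) z\<close> and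
  \<open>(b\<^sup>2 - c\<^sup>2m) w\<close>, and coprimality finishes.\<close>

lemma sqrt_nonsquare_lin_indep:
  fixes p q m :: int
  assumes "m \<ge> 0" and "\<not> (\<exists>k. k ^ 2 = m)"
    and "of_int p + of_int q * sqrt (of_int m) = (0::real)"
  shows "p = 0 \<and> q = 0"
proof (cases "q = 0")
  case True
  then show ?thesis using assms(3) by simp
next
  case False
  have "of_int q * sqrt (of_int m) = - (of_int p :: real)"
    using assms(3) by linarith
  then have "(of_int q * sqrt (of_int m))\<^sup>2 = (of_int p :: real)\<^sup>2"
    by (metis power2_minus)
  then have "of_int (q\<^sup>2 * m) = (of_int (p\<^sup>2) :: real)"
    using assms(1) by (simp add: power_mult_distrib)
  then have square_eq: "q\<^sup>2 * m = p\<^sup>2"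
    by (simp only: of_int_eq_iff)
  then have "q\<^sup>2 dvd p\<^sup>2"
    by (metis dvd_triv_left)
  then have "q dvd p"
    using pow_divides_pow_iff[of 2 q p] by simp
  then obtain k where "p = q * k" by blast
  with square_eq False have "m = k\<^sup>2"
    by (simp add: power_mult_distrib)
  with assms(2) show ?thesis by blast
qed

lemma dvd_coords_of_mult_by_coprime_norm:
  fixes a b c m z w :: int
  assumes "coprime a (b\<^sup>2 - c\<^sup>2 * m)"
    and "a dvd b * z + c * m * w" and "a dvd c * z + b * w"
  shows "a dvd z \<and> a dvd w"
proof -
  have "(b\<^sup>2 - c\<^sup>2 * m) * z = b * (b * z + c * m * w) - c * m * (c * z + b * w)"
   and "(b\<^sup>2 - c\<^sup>2 * m) * w = b * (c * z + b * w) - c * (b * z + c * m * w)"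
    by (simp_all add: algebra_simps power2_eq_square)
  then have "a dvd (b\<^sup>2 - c\<^sup>2 * m) * z" and "a dvd (b\<^sup>2 - c\<^sup>2 * m) * w"
    using assms(2,3) by simp_all
  with assms(1) show ?thesis
    by (simp add: coprime_dvd_mult_right_iff)
qed

theorem lemma3:
  fixes a b c m A B x0 y0 z0 w0 x' y' z' w' :: int
  assumes "a > 0" and "b > 0" and "c > 0" and "m > 0"
    and "\<not> (\<exists>k::int. k ^ 2 = m)"
    and "gcd a (b ^ 2 - c ^ 2 * m) = 1"
    and "of_int a * (of_int x0 + of_int y0 * sqrt (of_int m))
         + (of_int b + of_int c * sqrt (of_int m)) * (of_int z0 + of_int w0 * sqrt (of_int m))
         = of_int A + of_int B * sqrt (of_int m)"
    and "of_int a * (of_int x' + of_int y' * sqrt (of_int m))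
         + (of_int b + of_int c * sqrt (of_int m)) * (of_int z' + of_int w' * sqrt (of_int m))
         = of_int A + of_int B * sqrt (of_int m)"
  shows "a dvd (z0 - z') \<and> a dvd (w0 - w')"
proof -
  define s where "s = sqrt (of_int m :: real)"
  have s_squared: "s * s = of_int m"
    using assms(4) unfolding s_def by simp
  define x y z w where "x = x0 - x'" and "y = y0 - y'" and "z = z0 - z'" and "w = w0 - w'"
  have "of_int a * (of_int x + of_int y * s) + (of_int b + of_int c * s) * (of_int z + of_int w * s)
        = (0::real)"
    using assms(7,8) unfolding s_def x_def y_def z_def w_def by (simp add: algebra_simps)
  then have "of_int a * of_int x + of_int b * of_int z + of_int c * of_int w * (s * s)
      + (of_int a * of_int y + of_int b * of_int w + of_int c * of_int z) * s = (0::real)"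
    by (simp add: algebra_simps)
  then have "of_int (a * x + b * z + c * m * w) + of_int (a * y + c * z + b * w) * sqrt (of_int m)
      = (0::real)"
    unfolding s_squared by (simp add: s_def algebra_simps)
  then have "a * x + b * z + c * m * w = 0" and "a * y + c * z + b * w = 0"
    using sqrt_nonsquare_lin_indep assms(4,5) by (meson less_imp_le)+
  then have "a dvd b * z + c * m * w" and "a dvd c * z + b * w"
    by (metis add.assoc dvd_minus_iff dvd_triv_left minus_unique)+
  moreover have "coprime a (b\<^sup>2 - c\<^sup>2 * m)"
    using assms(6) by (simp add: coprime_iff_gcd_eq_1)
  ultimately show ?thesis
    using dvd_coords_of_mult_by_coprime_norm unfolding z_def w_def by blast
qed

end
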